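(* In every $\mathsf{TLAE}$-frame, each of the relations $R_\Box$, $R_\blacksquare$, $R_{\mathsf{H}}$ and $R_{\mathsf{A}}$ is acyclic, i.e., for none of these relations $R$ is there a finite sequence $w_0,w_1,\dots,w_k$ with $k\geq 1$, $w_k=w_0$ and $Rw_{i}w_{i+1}$ for all $0\le i<k$.
   Context: Fix finite sets $\mathtt{Action}=\{\delta_1,\dots,\delta_n\}$ (atomic action types) and $\mathtt{Agent}=\{\alpha_1,\dots,\alpha_m\}$ (agents). The set $\mathtt{Action}^*$ of action types is generated by $\Delta::=\delta_j\mid\Delta\cup\Delta\mid\overline{\Delta}$. For each agent $\alpha_i$ and each $j$ there is a propositional constant $\mathfrak{d}^{\alpha_i}_j$ and for each agent $\alpha_i$ a propositional constant $\mathfrak{e}^{\alpha_i}$. An $\mathcal{L}$-frame is a tuple $\langle W,\{W_{\mathfrak{d}^{\alpha_i}_j}\}_{i,j},\{W_{\mathfrak{e}^{\alpha_i}}\}_{i},R_\Box,R_{\mathsf{A}},R_\blacksquare,R_{\mathsf{H}}\rangle$ where $W$ is a set of moments, each $W_{\mathfrak{d}^{\alpha_i}_j},W_{\mathfrak{e}^{\alpha_i}}\subseteq W$, and $R_\Box,R_{\mathsf{A}},R_\blacksquare,R_{\mathsf{H}}$ are binary relations on $W$. For action types define $W_{t(\delta_j^{\alpha_i})}=W_{\mathfrak{d}^{\alpha_i}_j}$, $W_{t(\overline{\Delta}^{\alpha_i})}=W\setminus W_{t(\Delta^{\alpha_i})}$, $W_{t(\Delta^{\alpha_i}\cup\Gamma^{\alpha_k})}=W_{t(\Delta^{\alpha_i})}\cup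 W_{t(\Gamma^{\alpha_k})}$. A $\mathsf{TLAE}$-frame is an $\mathcal{L}$-frame satisfying: (pA3) if $R_{\mathsf{A}}wu$ and $R_{\mathsf{A}}wv$ then $u=v$; (pA4) if $R_{\mathsf{A}}wu$ then $R_\Box wu$; (pA5) for every $w$, all pairwise distinct agents $\alpha_{1},\dots,\alpha_{k}$ and (not necessarily distinct) $\Delta_1,\dots,\Delta_k\in\mathtt{Action}^*$: if for each $i$ there is $u_i$ with $R_\Box wu_i$ and $u_i\in W_{t(\Delta_i^{\alpha_i})}$, then there is $v$ with $R_\Box wv$ and $v\in W_{t(\Delta_1^{\alpha_1})}\cap\dots\cap W_{t(\Delta_k^{\alpha_k})}$; (pA6) for every $w$ and agent $\alpha_i$: if some $v$ with $R_\Box wv$ lies in $W_{\mathfrak{e}^{\alpha_i}}$, then some $u$ with $R_\Box wu$ lies outside $W_{\mathfrak{e}^{\alpha_i}}$; (pA10;A11) $R_\Box wv$ iff $R_\blacksquare vw$; (pA12) if $R_\blacksquare wu$ and $R_\blacksquare wv$ then $u=v$; (pA9;A14) $R_{\mathsf{H}}$ is the transitive closure of $R_\blacksquare$; (pA13) for every $w$, either there is no $v$ with $R_{\mathsf{H}}wv$, or there is $u$ with $R_{\mathsf{H}}wu$ such that there is no $z$ with $R_{\mathsf{H}}uz$. *)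

theory Defs
  imports Main
begin

datatype 'act atype = Atom 'act | AUn "'act atype" "'act atype" | ACompl "'act atype"

text \<open>W_t(Delta^alpha): the set of moments where agent alpha performs action type Delta.
  d alpha j is W_{d^alpha_j}.\<close>
fun Wt :: "'w set \<Rightarrow> ('ag \<Rightarrow> 'act \<Rightarrow> 'w set) \<Rightarrow> 'ag \<Rightarrow> 'act atype \<Rightarrow> 'w set" where
  "Wt W d a (Atom j) = d a j"
| "Wt W d a (AUn D G) = Wt W d a D \<union> Wt W d a G"
| "Wt W d a (ACompl D) = W - Wt W d a D"

definition L_frame ::
  "'w set \<Rightarrow> ('ag \<Rightarrow> 'act \<Rightarrow> 'w set) \<Rightarrow> ('ag \<Rightarrow> 'w set) \<Rightarrow>
   ('w \<Rightarrow> 'w \<Rightarrow> bool) \<Rightarrow> ('w \<Rightarrow> 'w \<Rightarrow> bool) \<Rightarrow> ('w \<Rightarrow> 'w \<Rightarrow> bool) \<Rightarrow> ('w \<Rightarrow> 'w \<Rightarrow> bool) \<Rightarrow> bool"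
where
  "L_frame W d e RBox RA RBl RH \<longleftrightarrow>
     (\<forall>a j. d a j \<subseteq> W) \<and> (\<forall>a. e a \<subseteq> W) \<and>
     (\<forall>R \<in> {RBox, RA, RBl, RH}. \<forall>x y. R x y \<longrightarrow> x \<in> W \<and> y \<in> W)"

definition TLAE_frame ::
  "'w set \<Rightarrow> ('ag::finite \<Rightarrow> 'act::finite \<Rightarrow> 'w set) \<Rightarrow> ('ag \<Rightarrow> 'w set) \<Rightarrow>
   ('w \<Rightarrow> 'w \<Rightarrow> bool) \<Rightarrow> ('w \<Rightarrow> 'w \<Rightarrow> bool) \<Rightarrow> ('w \<Rightarrow> 'w \<Rightarrow> bool) \<Rightarrow> ('w \<Rightarrow> 'w \<Rightarrow> bool) \<Rightarrow> bool"
where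
  "TLAE_frame W d e RBox RA RBl RH \<longleftrightarrow>
     L_frame W d e RBox RA RBl RH \<and>
     \<comment> \<open>pA3\<close>
     (\<forall>w u v. RA w u \<and> RA w v \<longrightarrow> u = v) \<and>
     \<comment> \<open>pA4\<close>
     (\<forall>w u. RA w u \<longrightarrow> RBox w u) \<and>
     \<comment> \<open>pA5 (A: the nonempty set of pairwise distinct agents, D a: the action type of agent a)\<close>
     (\<forall>w\<in>W. \<forall>(A::'ag set) (D::'ag \<Rightarrow> 'act atype). A \<noteq> {} \<longrightarrow>
        (\<forall>a\<in>A. \<exists>u. RBox w u \<and> u \<in> Wt W d a (D a)) \<longrightarrow>
        (\<exists>v. RBox w v \<and> (\<forall>a\<in>A. v \<in> Wt W d a (D a)))) \<and>
     \<comment> \<open>pA6\<close>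
     (\<forall>w\<in>W. \<forall>a. (\<exists>v. RBox w v \<and> v \<in> e a) \<longrightarrow> (\<exists>u. RBox w u \<and> u \<notin> e a)) \<and>
     \<comment> \<open>pA10;A11\<close>
     (\<forall>w v. RBox w v \<longleftrightarrow> RBl v w) \<and>
     \<comment> \<open>pA12\<close>
     (\<forall>w u v. RBl w u \<and> RBl w v \<longrightarrow> u = v) \<and>
     \<comment> \<open>pA9;A14\<close>
     RH = tranclp RBl \<and>
     \<comment> \<open>pA13\<close>
     (\<forall>w\<in>W. (\<not> (\<exists>v. RH w v)) \<or> (\<exists>u. RH w u \<and> \<not> (\<exists>z. RH u z)))"

definition acyclic_rel :: "('w \<Rightarrow> 'w \<Rightarrow> bool) \<Rightarrow> bool" where
  "acyclic_rel R \<longleftrightarrow>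
     \<not> (\<exists>(k::nat) (ws::nat \<Rightarrow> 'w). k \<ge> 1 \<and> ws k = ws 0 \<and> (\<forall>i<k. R (ws i) (ws (Suc i))))"

end

theory Submission
  imports Defs
begin

text \<open>RBl is functional (pA12), and by pA13 its transitive closure RH leads from every
  moment with a past to a moment without one. On a cycle of a functional relation every
  successor lies on the cycle again, so no such endpoint is reachable from it; hence RBl is
  acyclic. RBox is its converse, RH its transitive closure, and RA is contained in RBox.\<close>

lemma acyclic_rel_iff_irreflp_tranclp: "acyclic_rel R \<longleftrightarrow> (\<forall>x. \<not> R\<^sup>+\<^sup>+ x x)"
  unfolding acyclic_rel_def tranclp_power relpowp_fun_conv
  by (simp add: Suc_le_eq) blast

lemma acyclic_rel_mono: "R \<le> S \<Longrightarrow> acyclic_rel S \<Longrightarrow> acyclic_rel R"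
  unfolding acyclic_rel_def by blast

lemma acyclic_rel_conversep_iff: "acyclic_rel R\<inverse>\<inverse> \<longleftrightarrow> acyclic_rel R"
  by (simp add: acyclic_rel_iff_irreflp_tranclp tranclp_converse)

lemma acyclic_rel_tranclp_iff: "acyclic_rel R\<^sup>+\<^sup>+ \<longleftrightarrow> acyclic_rel R"
proof -
  have "transp R\<^sup>+\<^sup>+" by (rule transpI) (rule tranclp_trans)
  then show ?thesis by (simp add: acyclic_rel_iff_irreflp_tranclp tranclp_ident_if_transp)
qed

lemma right_unique_rtranclp_return_to_cycle:
  assumes "right_unique R" and cycle: "R\<^sup>+\<^sup>+ x x" and "R\<^sup>*\<^sup>* x u"
  shows "R\<^sup>*\<^sup>* u x"
  using assms(3)
proof (induction rule: rtranclp_induct)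
  case base
  show ?case by simp
next
  case (step y z)
  have "R\<^sup>+\<^sup>+ y x" using step.IH cycle by (rule rtranclp_tranclp_tranclp)
  then obtain z' where "R y z'" and "R\<^sup>*\<^sup>* z' x" by (blast dest: tranclpD)
  with \<open>R y z\<close> \<open>right_unique R\<close> show ?case by (metis right_unique_def)
qed

lemma acyclic_rel_if_right_unique_reaching_end:
  assumes "right_unique R"
    and reach_end: "\<And>x v. R\<^sup>+\<^sup>+ x v \<Longrightarrow> \<exists>u. R\<^sup>+\<^sup>+ x u \<and> (\<nexists>z. R\<^sup>+\<^sup>+ u z)"
  shows "acyclic_rel R"
  unfolding acyclic_rel_iff_irreflp_tranclp
proof (intro allI notI)
  fix x assume cycle: "R\<^sup>+\<^sup>+ x x"
  then obtain u where xu: "R\<^sup>+\<^sup>+ x u" and end_u: "\<nexists>z. R\<^sup>+\<^sup>+ u z"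
    using reach_end by blast
  have ux: "R\<^sup>*\<^sup>* u x"
    using \<open>right_unique R\<close> cycle tranclp_into_rtranclp[OF xu]
    by (rule right_unique_rtranclp_return_to_cycle)
  from ux xu have "R\<^sup>+\<^sup>+ u u" by (rule rtranclp_tranclp_tranclp)
  with end_u show False by blast
qed

theorem mainTheorem2:
  fixes W :: "'w set"
    and d :: "'ag::finite \<Rightarrow> 'act::finite \<Rightarrow> 'w set"
    and e :: "'ag \<Rightarrow> 'w set"
    and RBox RA RBl RH :: "'w \<Rightarrow> 'w \<Rightarrow> bool"
  assumes "TLAE_frame W d e RBox RA RBl RH"
  shows "acyclic_rel RBox \<and> acyclic_rel RBl \<and> acyclic_rel RH \<and> acyclic_rel RA"
proof -
  have RBl_in_W: "\<And>x y. RBl x y \<Longrightarrow> x \<in> W"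
    and "right_unique RBl"
    and RH: "RH = RBl\<^sup>+\<^sup>+"
    and end_reached: "\<forall>w\<in>W. (\<nexists>v. RH w v) \<or> (\<exists>u. RH w u \<and> (\<nexists>z. RH u z))"
    and RBox: "RBox = RBl\<inverse>\<inverse>"
    and RA_le: "RA \<le> RBox"
    using assms unfolding TLAE_frame_def L_frame_def right_unique_def by (auto 4 3 intro!: ext)
  have RBl_acyclic: "acyclic_rel RBl"
  proof (rule acyclic_rel_if_right_unique_reaching_end[OF \<open>right_unique RBl\<close>])
    fix x v assume "RBl\<^sup>+\<^sup>+ x v"
    then have "x \<in> W" by (blast dest: tranclpD RBl_in_W)
    with \<open>RBl\<^sup>+\<^sup>+ x v\<close> show "\<exists>u. RBl\<^sup>+\<^sup>+ x u \<and> (\<nexists>z. RBl\<^sup>+\<^sup>+ u z)"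
      using end_reached unfolding RH by blast
  qed
  then have "acyclic_rel RBox"
    by (simp add: RBox acyclic_rel_conversep_iff)
  with RBl_acyclic RA_le show ?thesis
    by (simp add: RH acyclic_rel_tranclp_iff acyclic_rel_mono)
qed

end
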